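(* A function $g\in\mathcal{G}$ is slow-dropping if and only if there exists a sub-polynomial function $h$ such that for all $y\in\mathbb{N}$ and all $x<y$ we have $g(x)\le g(y)h(y)$.
   Context: $\mathcal{G}=\{g:\mathbb{Z}_{\ge0}\to\mathbb{R}: g(0)=0,\ g(1)=1,\ g(x)>0\ \forall x>0\}$. A function $f:\mathbb{R}_{\ge0}\to\mathbb{R}_{\ge0}$ is sub-polynomial if for every $\alpha>0$, $\lim_{x\to\infty}x^\alpha f(x)=\infty$ and $\lim_{x\to\infty}x^{-\alpha}f(x)=0$. $g$ is slow-dropping if for every $\alpha>0$ there is $N>0$ such that for all $x<y$ with $y\ge N$, $g(y)\ge g(x)/y^\alpha$. *)

theory Defs
  imports Complex_Main
begin

definition in_G :: "(nat \<Rightarrow> real) \<Rightarrow> bool" where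
  "in_G g \<longleftrightarrow> g 0 = 0 \<and> g 1 = 1 \<and> (\<forall>x>0. g x > 0)"

text \<open>f : [0,\<infinity>) \<rightarrow> [0,\<infinity>); values on negative reals are irrelevant.\<close>
definition sub_polynomial :: "(real \<Rightarrow> real) \<Rightarrow> bool" where
  "sub_polynomial f \<longleftrightarrow> (\<forall>x\<ge>0. f x \<ge> 0) \<and>
     (\<forall>\<alpha>>0. filterlim (\<lambda>x. x powr \<alpha> * f x) at_top at_top \<and>
             ((\<lambda>x. x powr (-\<alpha>) * f x) \<longlongrightarrow> 0) at_top)"

definition slow_dropping :: "(nat \<Rightarrow> real) \<Rightarrow> bool" where
  "slow_dropping g \<longleftrightarrow> (\<forall>\<alpha>>0. \<exists>N>0. \<forall>x y. x < y \<and> real y \<ge> N \<longrightarrow>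
      g y \<ge> g x / (real y) powr \<alpha>)"

end

theory Submission
  imports Defs "HOL-Real_Asymp.Real_Asymp"
begin

text \<open>If g is slow-dropping, the largest drop ratio max(1, max_{x<n} g(x)/g(n)) is eventually
  below n^a for every a > 0; evaluated at the ceiling of y it is therefore sub-polynomial, and
  g(x) \<le> g(y) h(y) holds by construction. Conversely, a sub-polynomial h is eventually below
  y^a, which turns g(x) \<le> g(y) h(y) into the slow-dropping inequality.\<close>

definition drop_ratio :: "(nat \<Rightarrow> real) \<Rightarrow> nat \<Rightarrow> real" where
  "drop_ratio g n = Max (insert 1 ((\<lambda>x. g x / g n) ` {..<n}))"

lemma one_le_drop_ratio: "1 \<le> drop_ratio g n"
  unfolding drop_ratio_def by (rule Max_ge) auto

lemma le_drop_ratio: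
  assumes "x < n" and "g n > 0"
  shows "g x \<le> g n * drop_ratio g n"
proof -
  have "g x / g n \<le> drop_ratio g n"
    unfolding drop_ratio_def using assms(1) by (intro Max_ge) auto
  with assms(2) show ?thesis by (simp add: divide_le_eq mult.commute)
qed

lemma drop_ratio_le_iff:
  "drop_ratio g n \<le> c \<longleftrightarrow> 1 \<le> c \<and> (\<forall>x<n. g x / g n \<le> c)"
  unfolding drop_ratio_def by (subst Max_le_iff) auto

lemma drop_ratio_eventually_le_powr:
  assumes pos: "\<And>n. n > 0 \<Longrightarrow> g n > 0" and "slow_dropping g" and "a > 0"
  shows "eventually (\<lambda>n. drop_ratio g n \<le> real n powr a) sequentially"
proof -
  obtain N where N: "\<And>x y. x < y \<Longrightarrow> real y \<ge> N \<Longrightarrow> g x / real y powr a \<le> g y"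
    using \<open>slow_dropping g\<close> \<open>a > 0\<close> unfolding slow_dropping_def by blast
  have "drop_ratio g n \<le> real n powr a" if n: "real n \<ge> max N 1" for n
  proof (unfold drop_ratio_le_iff, intro conjI allI impI)
    show one_le: "1 \<le> real n powr a"
      using n \<open>a > 0\<close> by (simp add: ge_one_powr_ge_zero)
    fix x assume "x < n"
    with N n have "g x / real n powr a \<le> g n" by simp
    with one_le pos[of n] n show "g x / g n \<le> real n powr a"
      by (simp add: divide_le_eq mult.commute)
  qed
  then show ?thesis
    by (intro eventually_sequentiallyI[of "nat \<lceil>max N 1\<rceil>"]) simp
qed

lemma sub_polynomial_ceiling:
  fixes r :: "nat \<Rightarrow> real"
  assumes ge1: "\<And>n. r n \<ge> 1"
    and le_powr: "\<And>a. a > 0 \<Longrightarrow> eventually (\<lambda>n. r n \<le> real n powr a) sequentially"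
  shows "sub_polynomial (\<lambda>y. r (nat \<lceil>y\<rceil>))"
  unfolding sub_polynomial_def
proof (intro conjI allI impI)
  fix y :: real show "r (nat \<lceil>y\<rceil>) \<ge> 0"
    using ge1 by (meson order_trans zero_le_one)
next
  fix a :: real assume "a > 0"
  then have "filterlim (\<lambda>x::real. x powr a) at_top at_top" by real_asymp
  moreover have "\<forall>\<^sub>F x in at_top. x powr a \<le> x powr a * r (nat \<lceil>x\<rceil>)"
    using ge1 by (intro always_eventually allI) (simp add: mult_le_cancel_left1)
  ultimately show "filterlim (\<lambda>x. x powr a * r (nat \<lceil>x\<rceil>)) at_top at_top"
    by (rule filterlim_at_top_mono)
next
  fix a :: real assume "a > 0"
  obtain N where N: "\<And>n. n \<ge> N \<Longrightarrow> r n \<le> real n powr (a/2)"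
    using le_powr[of "a/2"] \<open>a > 0\<close> unfolding eventually_sequentially by auto
  have "\<forall>\<^sub>F x in at_top. 0 \<le> x powr -a * r (nat \<lceil>x\<rceil>)"
    using ge1 by (intro always_eventually allI) (meson mult_nonneg_nonneg order_trans
        powr_ge_zero zero_le_one)
  moreover have "\<forall>\<^sub>F x in at_top. x powr -a * r (nat \<lceil>x\<rceil>) \<le> x powr -a * (x + 1) powr (a/2)"
    using eventually_ge_at_top[of "max (real N) 1"]
  proof eventually_elim
    case (elim x)
    then have "nat \<lceil>x\<rceil> \<ge> N" by (simp add: le_nat_iff le_ceiling_iff)
    then have "r (nat \<lceil>x\<rceil>) \<le> real (nat \<lceil>x\<rceil>) powr (a/2)" by (rule N)
    also have "\<dots> \<le> (x + 1) powr (a/2)"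
      using elim \<open>a > 0\<close> of_int_ceiling_le_add_one[of x] by (intro powr_mono2) auto
    finally show ?case by (intro mult_left_mono) auto
  qed
  moreover have "((\<lambda>x::real. x powr -a * (x + 1) powr (a/2)) \<longlongrightarrow> 0) at_top"
    using \<open>a > 0\<close> by real_asymp
  ultimately show "((\<lambda>x. x powr -a * r (nat \<lceil>x\<rceil>)) \<longlongrightarrow> 0) at_top"
    by (rule tendsto_sandwich[OF _ _ tendsto_const])
qed

lemma sub_polynomial_eventually_less_powr:
  assumes "sub_polynomial h" and "a > 0"
  shows "eventually (\<lambda>x. h x < x powr a) at_top"
proof -
  have "((\<lambda>x. x powr -a * h x) \<longlongrightarrow> 0) at_top"
    using assms unfolding sub_polynomial_def by blast
  then have "eventually (\<lambda>x. x powr -a * h x < 1) at_top"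
    by (rule order_tendstoD) simp
  then show ?thesis
    using eventually_gt_at_top[of 0]
    by eventually_elim (simp add: powr_minus field_simps)
qed

lemma slow_dropping_if_bounded_by_sub_polynomial:
  assumes nonneg: "\<And>n. g n \<ge> 0" and "sub_polynomial h"
    and bound: "\<And>x y. x < y \<Longrightarrow> g x \<le> g y * h (real y)"
  shows "slow_dropping g"
  unfolding slow_dropping_def
proof (intro allI impI)
  fix a :: real assume "a > 0"
  then obtain N where N: "\<And>z. z \<ge> N \<Longrightarrow> h z < z powr a"
    using sub_polynomial_eventually_less_powr[OF \<open>sub_polynomial h\<close>]
    unfolding eventually_at_top_linorder by blast
  have "g x / real y powr a \<le> g y" if "x < y" "real y \<ge> max N 1" for x y
  proof -
    have "g x \<le> g y * h (real y)" using bound \<open>x < y\<close> .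
    also have "\<dots> \<le> g y * real y powr a"
      using N[of "real y"] that nonneg[of y] by (intro mult_left_mono) auto
    finally show ?thesis
      using that by (simp add: divide_le_eq)
  qed
  then show "\<exists>N>0. \<forall>x y. x < y \<and> real y \<ge> N \<longrightarrow> g x / real y powr a \<le> g y"
    by (intro exI[of _ "max N 1"]) auto
qed

theorem proposition15:
  fixes g :: "nat \<Rightarrow> real"
  assumes "in_G g"
  shows "slow_dropping g \<longleftrightarrow>
    (\<exists>h. sub_polynomial h \<and> (\<forall>y::nat. \<forall>x<y. g x \<le> g y * h (real y)))"
proof
  have pos: "n > 0 \<Longrightarrow> g n > 0" for n
    using assms unfolding in_G_def by auto
  assume "slow_dropping g"
  then have "sub_polynomial (\<lambda>y. drop_ratio g (nat \<lceil>y\<rceil>))"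
    using one_le_drop_ratio drop_ratio_eventually_le_powr[OF pos]
    by (intro sub_polynomial_ceiling) auto
  moreover have "\<forall>y::nat. \<forall>x<y. g x \<le> g y * drop_ratio g (nat \<lceil>real y\<rceil>)"
    using le_drop_ratio pos by simp
  ultimately show "\<exists>h. sub_polynomial h \<and> (\<forall>y::nat. \<forall>x<y. g x \<le> g y * h (real y))"
    by blast
next
  have "g n \<ge> 0" for n
    using assms unfolding in_G_def by (cases "n = 0") (auto simp: less_imp_le)
  then show "\<exists>h. sub_polynomial h \<and> (\<forall>y::nat. \<forall>x<y. g x \<le> g y * h (real y))
      \<Longrightarrow> slow_dropping g"
    using slow_dropping_if_bounded_by_sub_polynomial by blast
qed

end
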